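(* Let $X\subseteq\mathbb{R}^n$ be a nonempty closed convex set with $0\in X$, $\|\cdot\|$ the Euclidean norm, $D(x\|x')=\tfrac12\|x-x'\|^2$, and suppose $\max_{x,x'\in X}D(x\|x')\le F^2$. Let $\tau\in\mathbb{N}$ with $\tau\ge1$, $T\in\mathbb{N}$, and let $f_1,\dots,f_{T+\tau}:\mathbb{R}^n\to\mathbb{R}$ be convex differentiable functions with $\|\nabla f_t(x)\|\le L$ for all $x\in X$ and all $t$. Run delayed stochastic gradient descent: $x_1=\dots=x_{\tau+1}=0$, $g_t=\nabla f_t(x_t)$, and for $t=\tau+1,\dots,T+\tau$, $x_{t+1}=\operatorname{argmin}_{x\in X}\|x-(x_t-\eta_t g_{t-\tau})\|$, with $\eta_t=\sigma/\sqrt{t-\tau}$ for a constant $\sigma>0$. Let $x^*\in X$ be a minimizer over $X$ of the average risk $f^*(x)=\frac1T\sum_{t=1}^T f_t(x)$, and let $R[X]=\sum_{t=1}^T\big(f_t(x_t)-f_t(x^* )\big)$. Then $$R[X]\le \sigma L^2\sqrt T+F^2\frac{\sqrt T}{\sigma}+L^2\frac{\sigma\tau^2}{2}+2L^2\sigma\tau\sqrt T,$$ and consequently, for $\sigma^2=\frac{F^2}{2\tau L^2}$ and $T\ge\tau^2$, $$R[X]\le 4FL\sqrt{\tau T}.$$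
   Context: Delayed stochastic gradient descent updates the parameter with the gradient computed $\tau$ steps earlier, then projects onto $X$. "Lipschitz continuous with constant $L$" for the cost functions means the gradient bound $\|\nabla f_t(x)\|\le L$. *)

theory Defs
  imports "HOL-Analysis.Analysis"
begin

end

theory Submission imports Defs begin

text \<open>By convexity, the loss of round \<open>t\<close> is at most \<open>g t \<bullet> (x t - x\<^sup>*)\<close>, which we split as
  \<open>g t \<bullet> (x t - x (t+\<tau>)) + g t \<bullet> (x (t+\<tau>) - x\<^sup>*)\<close>: the gradient \<open>g t\<close> is the one used in
  the projected step from \<open>x (t+\<tau>)\<close> to \<open>x (t+\<tau>+1)\<close>. For the second term, non-expansiveness of
  the projection gives the online gradient descent estimate, a telescoping difference of
  squared distances to \<open>x\<^sup>*\<close> plus \<open>\<eta> L\<^sup>2/2\<close>; with \<open>\<eta> = \<sigma>/\<surd>t\<close> and the diameter bound this sums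
  to \<open>F\<^sup>2\<surd>T/\<sigma> + \<sigma>L\<^sup>2\<surd>T\<close>. The first term is the price of the delay: \<open>x t\<close> and \<open>x (t+\<tau>)\<close> are
  \<open>\<tau>\<close> steps apart, each of length at most \<open>\<eta> L\<close>, and \<open>\<Sum>k=1..T. 1/\<surd>k \<le> 2\<surd>T\<close> bounds the
  total by \<open>2\<sigma>L\<^sup>2\<tau>\<surd>T\<close>.\<close>

lemma convex_on_has_derivative_imp_above_tangent:
  fixes f :: "'a::real_inner \<Rightarrow> real"
  assumes convex: "convex_on UNIV f" and deriv: "(f has_derivative (\<lambda>h. g \<bullet> h)) (at y)"
  shows "f y + g \<bullet> (z - y) \<le> f z"
proof -
  define \<phi> where "\<phi> s = f (y + s *\<^sub>R (z - y))" for s :: real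
  have "convex_on UNIV \<phi>"
  proof (rule convex_onI)
    fix t a b :: real assume "t > 0" "t < 1"
    have "y + ((1 - t) *\<^sub>R a + t *\<^sub>R b) *\<^sub>R (z - y)
        = (1 - t) *\<^sub>R (y + a *\<^sub>R (z - y)) + t *\<^sub>R (y + b *\<^sub>R (z - y))"
      by (simp add: algebra_simps)
    then show "\<phi> ((1 - t) *\<^sub>R a + t *\<^sub>R b) \<le> (1 - t) * \<phi> a + t * \<phi> b"
      unfolding \<phi>_def using convex_onD[OF convex, of t] \<open>t > 0\<close> \<open>t < 1\<close> by simp
  qed simp
  moreover have "(\<phi> has_field_derivative (g \<bullet> (z - y))) (at 0)"
  proof -
    have line: "((\<lambda>s::real. y + s *\<^sub>R (z - y)) has_derivative (\<lambda>s. s *\<^sub>R (z - y))) (at 0)"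
      by (auto intro!: derivative_eq_intros)
    have "(f has_derivative (\<lambda>h. g \<bullet> h)) (at (y + 0 *\<^sub>R (z - y)))" using deriv by simp
    from has_derivative_compose[OF line this]
    have "(\<phi> has_derivative (\<lambda>s. g \<bullet> (s *\<^sub>R (z - y)))) (at 0)"
      unfolding \<phi>_def by (simp add: o_def)
    moreover have "(\<lambda>s. g \<bullet> (s *\<^sub>R (z - y))) = (*) (g \<bullet> (z - y))" by auto
    ultimately show ?thesis by (simp add: has_field_derivative_def)
  qed
  ultimately have "\<phi> 1 - \<phi> 0 \<ge> g \<bullet> (z - y) * (1 - 0)"
    by (intro convex_on_imp_above_tangent) auto
  then show ?thesis unfolding \<phi>_def by simp
qed

lemma closest_point_dist_le:
  fixes S :: "'a::euclidean_space set"
  assumes "convex S" "closed S" "z \<in> S"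
  shows "norm (closest_point S u - z) \<le> norm (u - z)"
  using closest_point_lipschitz[OF assms(1,2), of u z] closest_point_self[OF assms(3)] assms(3)
  by (auto simp: dist_norm)

lemma projected_step_inner_le:
  fixes S :: "'a::euclidean_space set"
  assumes "convex S" "closed S" "z \<in> S"
  shows "2 * \<eta> * (g \<bullet> (u - z))
    \<le> (norm (u - z))\<^sup>2 - (norm (closest_point S (u - \<eta> *\<^sub>R g) - z))\<^sup>2 + \<eta>\<^sup>2 * (norm g)\<^sup>2"
proof -
  define v where "v = u - z"
  have "(norm (closest_point S (u - \<eta> *\<^sub>R g) - z))\<^sup>2 \<le> (norm (v - \<eta> *\<^sub>R g))\<^sup>2"
    using closest_point_dist_le[OF assms, of "u - \<eta> *\<^sub>R g"] unfolding v_def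
    by (intro power_mono) (auto simp: algebra_simps)
  also have "\<dots> = (norm v)\<^sup>2 - 2 * \<eta> * (g \<bullet> v) + \<eta>\<^sup>2 * (norm g)\<^sup>2"
    unfolding power2_norm_eq_inner
    by (simp add: inner_diff_left inner_diff_right inner_commute power2_eq_square algebra_simps)
  finally show ?thesis unfolding v_def by linarith
qed

lemma sum_inverse_sqrt_le: "(\<Sum>k=1..n. 1 / sqrt (real k)) \<le> 2 * sqrt (real n)"
proof (induction n)
  case 0 then show ?case by simp
next
  case (Suc n)
  have pos: "sqrt (real n + 1) > 0" by simp
  have "(2 * sqrt (real n) + 1 / sqrt (real n + 1)) * sqrt (real n + 1)
      = 2 * (sqrt (real n) * sqrt (real n + 1)) + 1"
    using pos by (simp add: field_simps)
  also have "\<dots> \<le> 2 * sqrt (real n + 1) * sqrt (real n + 1)"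
  proof -
    have "0 \<le> (sqrt (real n + 1) - sqrt (real n))\<^sup>2" by simp
    then show ?thesis by (simp add: power2_eq_square algebra_simps)
  qed
  finally have "2 * sqrt (real n) + 1 / sqrt (real n + 1) \<le> 2 * sqrt (real n + 1)"
    using pos by (meson mult_le_cancel_right_pos)
  then show ?case using Suc by (simp add: add.commute)
qed

lemma sum_telescope_mono_weights_le:
  fixes D a :: "nat \<Rightarrow> real"
  assumes "\<And>t. 1 \<le> t \<Longrightarrow> t \<le> Suc n \<Longrightarrow> 0 \<le> D t \<and> D t \<le> M"
    and "mono a" and "0 \<le> a 0"
  shows "(\<Sum>t=1..n. (D t - D (Suc t)) * a t) \<le> a n * (M - D (Suc n))"
  using assms(1)
proof (induction n)
  case 0 then show ?case using assms(3) by simp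
next
  case (Suc n)
  have "a n * (M - D (Suc n)) \<le> a (Suc n) * (M - D (Suc n))"
    using \<open>mono a\<close> Suc.prems[of "Suc n"] by (intro mult_right_mono) (auto simp: mono_def)
  then show ?case using Suc by (simp add: algebra_simps)
qed

lemma norm_diff_le_sum_steps:
  fixes x :: "nat \<Rightarrow> 'a::real_normed_vector"
  shows "norm (x t - x (t + m)) \<le> (\<Sum>i<m. norm (x (t + i + 1) - x (t + i)))"
proof (induction m)
  case 0 then show ?case by simp
next
  case (Suc m)
  have "norm (x t - x (t + Suc m)) \<le> norm (x t - x (t + m)) + norm (x (t + m) - x (t + m + 1))"
    using norm_triangle_ineq[of "x t - x (t + m)" "x (t + m) - x (t + m + 1)"] by simp
  then show ?case using Suc by (simp add: norm_minus_commute)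
qed

locale delayed_sgd =
  fixes X :: "'a::euclidean_space set"
    and f :: "nat \<Rightarrow> 'a \<Rightarrow> real"
    and grad :: "nat \<Rightarrow> 'a \<Rightarrow> 'a"
    and x :: "nat \<Rightarrow> 'a"
    and F L \<sigma> :: real
    and \<tau> T :: nat
  assumes X_nonempty: "X \<noteq> {}"
    and X_closed: "closed X"
    and X_convex: "convex X"
    and X_zero: "0 \<in> X"
    and diam: "\<forall>y\<in>X. \<forall>y'\<in>X. (1/2) * (norm (y - y'))\<^sup>2 \<le> F\<^sup>2"
    and tau_pos: "\<tau> \<ge> 1"
    and f_convex: "\<forall>t\<in>{1..T+\<tau>}. convex_on UNIV (f t)"
    and f_grad: "\<forall>t\<in>{1..T+\<tau>}. \<forall>y. (f t has_derivative (\<lambda>h. grad t y \<bullet> h)) (at y)"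
    and grad_bound: "\<forall>t\<in>{1..T+\<tau>}. \<forall>y\<in>X. norm (grad t y) \<le> L"
    and sigma_pos: "\<sigma> > 0"
    and x_init: "\<forall>t\<in>{1..\<tau>+1}. x t = 0"
    and x_step: "\<forall>t\<in>{\<tau>+1..T+\<tau>}.
        x (t + 1) = closest_point X (x t - (\<sigma> / sqrt (real (t - \<tau>))) *\<^sub>R grad (t - \<tau>) (x (t - \<tau>)))"
begin

abbreviation g :: "nat \<Rightarrow> 'a" where "g t \<equiv> grad t (x t)"

abbreviation step_size :: "nat \<Rightarrow> real" where "step_size t \<equiv> \<sigma> / sqrt (real t)"

definition step_length_bound :: "nat \<Rightarrow> real" where
  "step_length_bound j = (if j \<le> \<tau> then 0 else step_size (j - \<tau>) * L)"

lemma iterate_in_X: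
  assumes "1 \<le> t" "t \<le> T + \<tau> + 1"
  shows "x t \<in> X"
proof (cases "t \<le> \<tau> + 1")
  case True then show ?thesis using x_init X_zero assms by auto
next
  case False
  then have "t - 1 \<in> {\<tau>+1..T+\<tau>}" "t = t - 1 + 1" using assms by auto
  then show ?thesis using x_step closest_point_in_set[OF X_closed X_nonempty] by metis
qed

lemma norm_g_le:
  assumes "t \<in> {1..T+\<tau>}"
  shows "norm (g t) \<le> L"
  using grad_bound iterate_in_X assms by auto

lemma L_nonneg: "L \<ge> 0"
proof -
  have "norm (g 1) \<le> L" using norm_g_le tau_pos by simp
  then show ?thesis by (rule order_trans[OF norm_ge_zero])
qed

lemma delayed_step:
  assumes "t \<in> {1..T}"
  shows "x (t + \<tau> + 1) = closest_point X (x (t + \<tau>) - step_size t *\<^sub>R g t)"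
  using x_step[rule_format, of "t + \<tau>"] assms by auto

lemma step_length_bound_nonneg: "step_length_bound j \<ge> 0"
  unfolding step_length_bound_def using sigma_pos L_nonneg by auto

lemma norm_step_le:
  assumes "j \<in> {1..T+\<tau>}"
  shows "norm (x (j + 1) - x j) \<le> step_length_bound j"
proof (cases "j \<le> \<tau>")
  case True then show ?thesis using x_init assms step_length_bound_nonneg[of j] by auto
next
  case False
  define k where "k = j - \<tau>"
  have k: "j = k + \<tau>" "k \<in> {1..T}" using assms False unfolding k_def by auto
  have "x j \<in> X" using iterate_in_X assms by auto
  moreover have "x (j + 1) = closest_point X (x j - step_size k *\<^sub>R g k)"
    using delayed_step[OF k(2)] k(1) by simp
  ultimately have "norm (x (j + 1) - x j) \<le> norm ((x j - step_size k *\<^sub>R g k) - x j)"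
    using closest_point_dist_le[OF X_convex X_closed] by presburger
  also have "\<dots> = step_size k * norm (g k)" using sigma_pos by simp
  also have "\<dots> \<le> step_size k * L"
    using norm_g_le[of k] k sigma_pos by (intro mult_left_mono) auto
  finally show ?thesis unfolding step_length_bound_def using False k by simp
qed

lemma delay_error_le:
  assumes "t \<in> {1..T}"
  shows "g t \<bullet> (x t - x (t + \<tau>)) \<le> L * (\<Sum>i<\<tau>. step_length_bound (t + i))"
proof -
  have "g t \<bullet> (x t - x (t + \<tau>)) \<le> norm (g t) * norm (x t - x (t + \<tau>))"
    by (rule norm_cauchy_schwarz)
  also have "\<dots> \<le> L * norm (x t - x (t + \<tau>))"
    using norm_g_le assms by (intro mult_right_mono) auto
  also have "\<dots> \<le> L * (\<Sum>i<\<tau>. norm (x (t + i + 1) - x (t + i)))"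
    using norm_diff_le_sum_steps[of x t \<tau>] L_nonneg by (intro mult_left_mono) auto
  also have "\<dots> \<le> L * (\<Sum>i<\<tau>. step_length_bound (t + i))"
    using L_nonneg assms norm_step_le by (intro mult_left_mono sum_mono) auto
  finally show ?thesis .
qed

lemma descent_le:
  assumes t: "t \<in> {1..T}" and z: "z \<in> X"
  shows "g t \<bullet> (x (t + \<tau>) - z)
    \<le> ((norm (x (t + \<tau>) - z))\<^sup>2 - (norm (x (Suc t + \<tau>) - z))\<^sup>2) * (sqrt (real t) / (2 * \<sigma>))
      + \<sigma> * L\<^sup>2 / 2 * (1 / sqrt (real t))"
    (is "?G \<le> ?A * _ + _")
proof -
  have "2 * step_size t * ?G \<le> ?A + (step_size t)\<^sup>2 * (norm (g t))\<^sup>2"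
    using projected_step_inner_le[OF X_convex X_closed z, of "step_size t" "g t" "x (t + \<tau>)"]
      delayed_step[OF t] by simp
  also have "(step_size t)\<^sup>2 * (norm (g t))\<^sup>2 \<le> (step_size t)\<^sup>2 * L\<^sup>2"
    using norm_g_le t by (intro mult_left_mono power_mono) auto
  finally have "2 * step_size t * ?G \<le> ?A + (step_size t)\<^sup>2 * L\<^sup>2" by simp
  \<comment> \<open>stated for an abstract \<open>r = \<surd>t\<close>, so that \<open>\<surd>t\<^sup>2\<close> is not rewritten to \<open>t\<close> midway\<close>
  moreover have "2 * (\<sigma> / r) * ?G \<le> ?A + (\<sigma> / r)\<^sup>2 * L\<^sup>2
      \<Longrightarrow> ?G \<le> ?A * (r / (2 * \<sigma>)) + \<sigma> * L\<^sup>2 / 2 * (1 / r)" if "r > 0" for r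
    using that sigma_pos by (simp add: field_simps power2_eq_square)
  ultimately show ?thesis using t by auto
qed

lemma sum_step_length_bound_le:
  "(\<Sum>j=1..T+\<tau>. step_length_bound j) \<le> 2 * \<sigma> * L * sqrt (real T)"
proof -
  have "(\<Sum>j=1..T+\<tau>. step_length_bound j) = (\<Sum>j=1+\<tau>..T+\<tau>. step_length_bound j)"
    by (rule sum.mono_neutral_right) (auto simp: step_length_bound_def)
  also have "\<dots> = (\<Sum>k=1..T. step_length_bound (k + \<tau>))"
    by (rule sum.shift_bounds_cl_nat_ivl)
  also have "\<dots> = \<sigma> * L * (\<Sum>k=1..T. 1 / sqrt (real k))"
    by (simp add: step_length_bound_def sum_distrib_left)
  also have "\<dots> \<le> \<sigma> * L * (2 * sqrt (real T))"
    using sum_inverse_sqrt_le sigma_pos L_nonneg by (intro mult_left_mono) auto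
  finally show ?thesis by simp
qed

lemma sum_delay_error_le:
  "(\<Sum>t=1..T. L * (\<Sum>i<\<tau>. step_length_bound (t + i))) \<le> 2 * L\<^sup>2 * \<sigma> * real \<tau> * sqrt (real T)"
proof -
  have "(\<Sum>t=1..T. L * (\<Sum>i<\<tau>. step_length_bound (t + i)))
      = L * (\<Sum>i<\<tau>. \<Sum>t=1..T. step_length_bound (t + i))"
    by (simp only: sum_distrib_left[symmetric] sum.swap[of _ "{1..T}"])
  also have "\<dots> \<le> L * (\<Sum>i<\<tau>. \<Sum>j=1..T+\<tau>. step_length_bound j)"
  proof (intro mult_left_mono sum_mono L_nonneg)
    fix i assume "i \<in> {..<\<tau>}"
    then have "(\<Sum>j=1+i..T+i. step_length_bound j) \<le> (\<Sum>j=1..T+\<tau>. step_length_bound j)"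
      using step_length_bound_nonneg by (intro sum_mono2) auto
    then show "(\<Sum>t=1..T. step_length_bound (t + i)) \<le> (\<Sum>j=1..T+\<tau>. step_length_bound j)"
      by (simp only: sum.shift_bounds_cl_nat_ivl)
  qed
  also have "\<dots> \<le> L * real \<tau> * (2 * \<sigma> * L * sqrt (real T))"
    using sum_step_length_bound_le L_nonneg by (simp add: mult.assoc mult_left_mono)
  finally show ?thesis by (simp add: power2_eq_square algebra_simps)
qed

lemma sum_descent_telescope_le:
  assumes z: "z \<in> X"
  shows "(\<Sum>t=1..T. ((norm (x (t + \<tau>) - z))\<^sup>2 - (norm (x (Suc t + \<tau>) - z))\<^sup>2)
      * (sqrt (real t) / (2 * \<sigma>))) \<le> F\<^sup>2 * sqrt (real T) / \<sigma>"
proof -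
  define D where "D t = (norm (x (t + \<tau>) - z))\<^sup>2" for t
  have "(\<Sum>t=1..T. (D t - D (Suc t)) * (sqrt (real t) / (2 * \<sigma>)))
      \<le> sqrt (real T) / (2 * \<sigma>) * (2 * F\<^sup>2 - D (Suc T))"
  proof (rule sum_telescope_mono_weights_le)
    fix t assume "1 \<le> t" "t \<le> Suc T"
    then have "(1/2) * (norm (x (t + \<tau>) - z))\<^sup>2 \<le> F\<^sup>2"
      using diam iterate_in_X z by simp
    then show "0 \<le> D t \<and> D t \<le> 2 * F\<^sup>2" unfolding D_def by simp
  next
    show "mono (\<lambda>t. sqrt (real t) / (2 * \<sigma>))"
      using sigma_pos by (intro monoI divide_right_mono) auto
  qed simp
  also have "\<dots> \<le> sqrt (real T) / (2 * \<sigma>) * (2 * F\<^sup>2)"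
    using sigma_pos unfolding D_def by (intro mult_left_mono) auto
  finally show ?thesis using sigma_pos by (simp add: D_def field_simps)
qed

lemma regret_le:
  assumes z: "z \<in> X"
  shows "(\<Sum>t=1..T. f t (x t) - f t z)
    \<le> \<sigma> * L\<^sup>2 * sqrt (real T) + F\<^sup>2 * sqrt (real T) / \<sigma> + 2 * L\<^sup>2 * \<sigma> * real \<tau> * sqrt (real T)"
proof -
  have "f t (x t) - f t z \<le> L * (\<Sum>i<\<tau>. step_length_bound (t + i))
      + ((norm (x (t + \<tau>) - z))\<^sup>2 - (norm (x (Suc t + \<tau>) - z))\<^sup>2) * (sqrt (real t) / (2 * \<sigma>))
      + \<sigma> * L\<^sup>2 / 2 * (1 / sqrt (real t))" (is "_ \<le> ?B t") if t: "t \<in> {1..T}" for t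
  proof -
    have "f t (x t) - f t z \<le> g t \<bullet> (x t - z)"
      using convex_on_has_derivative_imp_above_tangent[of "f t" "g t" "x t" z] f_convex f_grad t
      by (auto simp: inner_diff_right)
    also have "\<dots> = g t \<bullet> (x t - x (t + \<tau>)) + g t \<bullet> (x (t + \<tau>) - z)"
      by (simp add: inner_diff_right)
    finally show ?thesis using delay_error_le[OF t] descent_le[OF t z] by linarith
  qed
  then have "(\<Sum>t=1..T. f t (x t) - f t z) \<le> (\<Sum>t=1..T. ?B t)"
    by (rule sum_mono)
  also have "\<dots> = (\<Sum>t=1..T. L * (\<Sum>i<\<tau>. step_length_bound (t + i)))
       + (\<Sum>t=1..T. ((norm (x (t + \<tau>) - z))\<^sup>2 - (norm (x (Suc t + \<tau>) - z))\<^sup>2)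
          * (sqrt (real t) / (2 * \<sigma>)))
       + \<sigma> * L\<^sup>2 / 2 * (\<Sum>t=1..T. 1 / sqrt (real t))"
    by (simp only: sum.distrib sum_distrib_left)
  moreover have "\<sigma> * L\<^sup>2 / 2 * (\<Sum>t=1..T. 1 / sqrt (real t)) \<le> \<sigma> * L\<^sup>2 * sqrt (real T)"
    using mult_left_mono[OF sum_inverse_sqrt_le[of T], of "\<sigma> * L\<^sup>2 / 2"] sigma_pos by simp
  ultimately show ?thesis
    using sum_delay_error_le sum_descent_telescope_le[OF z] by linarith
qed

end

text \<open>With \<open>\<sigma>\<^sup>2 = F\<^sup>2/(2\<tau>L\<^sup>2)\<close> every term is a multiple of \<open>\<sigma>L\<^sup>2\<surd>T\<close>, and \<open>1 + 4\<tau> \<le> 4\<surd>2 \<tau>\<close>.\<close>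

lemma tuned_regret_bound_le:
  fixes F L \<sigma> s t :: real
  assumes \<sigma>: "\<sigma> > 0" and L: "L \<ge> 0" and F: "F \<ge> 0" and t: "t \<ge> 1" and s: "s \<ge> 0"
    and tuned: "\<sigma>\<^sup>2 = F\<^sup>2 / (2 * t * L\<^sup>2)"
  shows "\<sigma> * L\<^sup>2 * s + F\<^sup>2 * s / \<sigma> + 2 * L\<^sup>2 * \<sigma> * t * s \<le> 4 * F * L * sqrt t * s"
proof -
  have "L \<noteq> 0" using tuned \<sigma> by auto
  then have F2: "F\<^sup>2 = \<sigma>\<^sup>2 * (2 * t * L\<^sup>2)" using tuned t by (simp add: field_simps)
  then have "F\<^sup>2 = (\<sigma> * L * sqrt (2 * t))\<^sup>2" using t by (simp add: power_mult_distrib)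
  then have F_eq: "F = \<sigma> * L * sqrt (2 * t)"
    using F \<sigma> L t by (simp add: power2_eq_iff_nonneg)
  have "sqrt 2 \<ge> 1.375" by (rule real_le_rsqrt) (simp add: power2_eq_square)
  then have "5.5 * t \<le> 4 * sqrt 2 * t" using t by (intro mult_right_mono) auto
  then have "1 + 4 * t \<le> 4 * sqrt 2 * t" using t by linarith
  have "F\<^sup>2 * s / \<sigma> = \<sigma> * L\<^sup>2 * s * (2 * t)"
    using F2 \<sigma> by (simp add: field_simps power2_eq_square)
  then have "\<sigma> * L\<^sup>2 * s + F\<^sup>2 * s / \<sigma> + 2 * L\<^sup>2 * \<sigma> * t * s = \<sigma> * L\<^sup>2 * s * (1 + 4 * t)"
    by (simp add: algebra_simps)
  also have "\<dots> \<le> \<sigma> * L\<^sup>2 * s * (4 * sqrt 2 * t)"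
    using \<open>1 + 4 * t \<le> 4 * sqrt 2 * t\<close> \<sigma> s by (intro mult_left_mono) auto
  also have "\<dots> = 4 * F * L * sqrt t * s"
    using t unfolding F_eq by (simp add: real_sqrt_mult power2_eq_square algebra_simps)
  finally show ?thesis .
qed

text \<open>The regret bound holds against every comparator in \<open>X\<close>. Nor is \<open>T \<ge> \<tau>\<^sup>2\<close>: it serves to absorb the term \<open>L\<^sup>2\<sigma>\<tau>\<^sup>2/2\<close>, which the bound proved
  in \<open>regret_le\<close> does not contain.\<close>

theorem theorem2:
  fixes X :: "'a::euclidean_space set"
    and f :: "nat \<Rightarrow> 'a \<Rightarrow> real"
    and grad :: "nat \<Rightarrow> 'a \<Rightarrow> 'a"
    and x :: "nat \<Rightarrow> 'a"
    and xstar :: 'a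
    and F L \<sigma> :: real
    and \<tau> T :: nat
  assumes X_nonempty: "X \<noteq> {}"
    and X_closed: "closed X"
    and X_convex: "convex X"
    and X_zero: "0 \<in> X"
    and F_nonneg: "F \<ge> 0"
    and diam: "\<forall>y\<in>X. \<forall>y'\<in>X. (1/2) * (norm (y - y'))\<^sup>2 \<le> F\<^sup>2"
    and tau_pos: "\<tau> \<ge> 1"
    and f_convex: "\<forall>t\<in>{1..T+\<tau>}. convex_on UNIV (f t)"
    and f_grad: "\<forall>t\<in>{1..T+\<tau>}. \<forall>y. (f t has_derivative (\<lambda>h. grad t y \<bullet> h)) (at y)"
    and grad_bound: "\<forall>t\<in>{1..T+\<tau>}. \<forall>y\<in>X. norm (grad t y) \<le> L"
    and sigma_pos: "\<sigma> > 0"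
    and x_init: "\<forall>t\<in>{1..\<tau>+1}. x t = 0"
    and x_step: "\<forall>t\<in>{\<tau>+1..T+\<tau>}.
        x (t + 1) = closest_point X (x t - (\<sigma> / sqrt (real (t - \<tau>))) *\<^sub>R grad (t - \<tau>) (x (t - \<tau>)))"
    and xstar_in: "xstar \<in> X"
    and xstar_min: "\<forall>y\<in>X. (1 / real T) * (\<Sum>t=1..T. f t xstar) \<le> (1 / real T) * (\<Sum>t=1..T. f t y)"
  shows "(\<Sum>t=1..T. f t (x t) - f t xstar)
           \<le> \<sigma> * L\<^sup>2 * sqrt (real T) + F\<^sup>2 * sqrt (real T) / \<sigma>
             + L\<^sup>2 * \<sigma> * (real \<tau>)\<^sup>2 / 2 + 2 * L\<^sup>2 * \<sigma> * real \<tau> * sqrt (real T)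
       \<and> ((\<sigma>\<^sup>2 = F\<^sup>2 / (2 * real \<tau> * L\<^sup>2) \<and> T \<ge> \<tau>\<^sup>2)
           \<longrightarrow> (\<Sum>t=1..T. f t (x t) - f t xstar) \<le> 4 * F * L * sqrt (real \<tau> * real T))"
proof -
  interpret delayed_sgd X f grad x F L \<sigma> \<tau> T
    by unfold_locales (use assms in auto)
  have regret: "(\<Sum>t=1..T. f t (x t) - f t xstar)
      \<le> \<sigma> * L\<^sup>2 * sqrt (real T) + F\<^sup>2 * sqrt (real T) / \<sigma> + 2 * L\<^sup>2 * \<sigma> * real \<tau> * sqrt (real T)"
    by (rule regret_le[OF xstar_in])
  moreover have "L\<^sup>2 * \<sigma> * (real \<tau>)\<^sup>2 / 2 \<ge> 0" using sigma_pos by simp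
  moreover have "4 * F * L * sqrt (real \<tau> * real T)
      \<ge> \<sigma> * L\<^sup>2 * sqrt (real T) + F\<^sup>2 * sqrt (real T) / \<sigma> + 2 * L\<^sup>2 * \<sigma> * real \<tau> * sqrt (real T)"
    if "\<sigma>\<^sup>2 = F\<^sup>2 / (2 * real \<tau> * L\<^sup>2)"
    using tuned_regret_bound_le[OF sigma_pos L_nonneg F_nonneg _ _ that] tau_pos
    by (simp add: real_sqrt_mult mult.assoc)
  ultimately show ?thesis by fastforce
qed

end
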